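(* Let $X$ be an $L$-space with a convexifying operator $P$ such that $X^{\rm inv}\cap X^{\rm c}\ne\{\theta\}$, let $(T,r)$ be a metric compact, $Q\subset T$ a compact set, $\mu$ a Borel measure on $T$, $\omega$ a modulus of continuity, and $x_1,\dots,x_n\in T$. Consider $\Lambda f=\int_Q f(s)\,d\mu(s)$ on $W=H^\omega(T,X)$ and the information $I(f)=(P(f(x_1)),\dots,P(f(x_n)))$. Then $$\mathcal E(\Lambda,H^\omega(T,X),I,X)=\int_Q\min_{i=1,\dots,n}\omega(r(x_i,t))\,d\mu(t),$$ and the method $\Phi^*(I(f))=\sum_{i=1}^nP(f(x_i))\,\mu(T_i\cap Q)$ is optimal, where $\tilde T_i=\{t\in T: r(t,x_i)\le r(t,x_j)\ \forall j\ne i\}$, $T_1=\tilde T_1$ and $T_j=\tilde T_j\setminus\bigcup_{i=1}^{j-1}\tilde T_i$ for $j=2,\dots,n$.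
   Context: Semilinear space: a set $X$ with addition and multiplication by reals such that for all $x,y,z\in X$, $\alpha,\beta\in\mathbb R$: $x+y=y+x$; $x+(y+z)=(x+y)+z$; there is $\theta$ with $x+\theta=x$; $\alpha(x+y)=\alpha x+\alpha y$; $\alpha(\beta x)=(\alpha\beta)x$; $1\cdot x=x$, $0\cdot x=\theta$. $x$ is convex if $(\alpha+\beta)x=\alpha x+\beta x$ for all $\alpha,\beta\ge0$ ($X^{\rm c}$: convex elements); $x$ is invertible if $x+x'=\theta$ for some $x'$ ($X^{\rm inv}$: invertible elements). An $L$-space is a semilinear space with a complete separable metric $h_X$ satisfying $h_X(\alpha x,\alpha y)=|\alpha|h_X(x,y)$ and $h_X(x+z,y+z)\le h_X(x,y)$. A convexifying operator is a surjective $P\colon X\to X^{\rm c}$ with $h_X(P(x),P(y))\le h_X(x,y)$, $P\circ P=P$, $P(\alpha x+\beta y)=\alpha P(x)+\beta P(y)$. Integral: $f\colon T\to X$ is measurable if $h_X(f(\cdot),x)$ is Borel measurable for all $x$; for simple bounded $f$ with values $f_i$ on disjoint Borel sets $T_i$ covering $T$, $\int_Tf\,d\mu=\sum_iP(f_i)\mu(T_i)$; for bounded measurable $f$, $\int_Tf\,d\mu$ is the limit of integrals of any uniformly bounded sequence of simple functions converging to $f$ a.e.; $\int_Qf\,d\mu=\int_T\chi_Qf\,d\mu$. Modulus of continuity: non-decreasing continuous $\omega\colon[0,\infty)\to[0,\infty)$, $\omega(0)=0$, $\omega(a+b)\le\omega(a)+\omega(b)$; $H^\omega(T,X)=\{f\colon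 T\to X: h_X(f(s),f(t))\le\omega(r(s,t))\ \forall s,t\}$. Optimal recovery: for a class $W$, a map $\Lambda\colon W\to Z$ into a metric space $(Z,h_Z)$ and an information map $I$ on $W$, a method is any map $\Phi$ from the values of $I$ to $Z$; its error is $\mathcal E(\Lambda,W,I,\Phi,Z)=\sup_{w\in W}h_Z(\Lambda(w),\Phi(I(w)))$; the optimal error is $\mathcal E(\Lambda,W,I,Z)=\inf_\Phi\mathcal E(\Lambda,W,I,\Phi,Z)$, and $\Phi^*$ is optimal if it attains this infimum. *)

theory Defs
  imports "HOL-Analysis.Analysis"
begin

text \<open>The semilinear space X is a type 'x of class comm_monoid_add (addition +,
  neutral element theta = 0), together with an explicit multiplication by reals sm.
  The metric h_X is dist of the type (class complete_space gives completeness).\<close>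

definition semilinear :: "(real \<Rightarrow> 'x::comm_monoid_add \<Rightarrow> 'x) \<Rightarrow> bool" where
  "semilinear sm \<longleftrightarrow>
     (\<forall>a x y. sm a (x + y) = sm a x + sm a y) \<and>
     (\<forall>a b x. sm a (sm b x) = sm (a * b) x) \<and>
     (\<forall>x. sm 1 x = x) \<and>
     (\<forall>x. sm 0 x = 0)"

definition convex_elems :: "(real \<Rightarrow> 'x::comm_monoid_add \<Rightarrow> 'x) \<Rightarrow> 'x set" where
  "convex_elems sm = {x. \<forall>a b. a \<ge> 0 \<longrightarrow> b \<ge> 0 \<longrightarrow> sm (a + b) x = sm a x + sm b x}"

definition inv_elems :: "'x::comm_monoid_add set" where
  "inv_elems = {x. \<exists>x'. x + x' = 0}"

definition L_space :: "(real \<Rightarrow> 'x::{comm_monoid_add,complete_space} \<Rightarrow> 'x) \<Rightarrow> bool" where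
  "L_space sm \<longleftrightarrow> semilinear sm \<and>
     (\<exists>D. countable D \<and> closure D = (UNIV :: 'x set)) \<and>
     (\<forall>a x y. dist (sm a x) (sm a y) = \<bar>a\<bar> * dist x y) \<and>
     (\<forall>x y z::'x. dist (x + z) (y + z) \<le> dist x y)"

definition convexifying ::
  "(real \<Rightarrow> 'x::{comm_monoid_add,metric_space} \<Rightarrow> 'x) \<Rightarrow> ('x \<Rightarrow> 'x) \<Rightarrow> bool" where
  "convexifying sm P \<longleftrightarrow>
     range P = convex_elems sm \<and>
     (\<forall>x y. dist (P x) (P y) \<le> dist x y) \<and>
     (\<forall>x. P (P x) = P x) \<and>
     (\<forall>a b x y. P (sm a x + sm b y) = sm a (P x) + sm b (P y))"

definition modulus_of_continuity :: "(real \<Rightarrow> real) \<Rightarrow> bool" where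
  "modulus_of_continuity \<omega> \<longleftrightarrow>
     mono_on {0..} \<omega> \<and> continuous_on {0..} \<omega> \<and> \<omega> 0 = 0 \<and>
     (\<forall>t\<ge>0. \<omega> t \<ge> 0) \<and>
     (\<forall>a b. a \<ge> 0 \<longrightarrow> b \<ge> 0 \<longrightarrow> \<omega> (a + b) \<le> \<omega> a + \<omega> b)"

definition Hclass :: "'a::metric_space set \<Rightarrow> (real \<Rightarrow> real) \<Rightarrow> ('a \<Rightarrow> 'x::metric_space) set" where
  "Hclass T \<omega> = {f. \<forall>s\<in>T. \<forall>t\<in>T. dist (f s) (f t) \<le> \<omega> (dist s t)}"

definition simple_X :: "'a measure \<Rightarrow> ('a \<Rightarrow> 'x) \<Rightarrow> bool" where
  "simple_X M f \<longleftrightarrow> finite (f ` space M) \<and>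
     (\<forall>v\<in>f ` space M. {t\<in>space M. f t = v} \<in> sets M)"

definition simple_int ::
  "(real \<Rightarrow> 'x::comm_monoid_add \<Rightarrow> 'x) \<Rightarrow> ('x \<Rightarrow> 'x) \<Rightarrow> 'a measure \<Rightarrow> ('a \<Rightarrow> 'x) \<Rightarrow> 'x" where
  "simple_int sm P M f = (\<Sum>v\<in>f ` space M. sm (measure M {t\<in>space M. f t = v}) (P v))"

definition X_integral ::
  "(real \<Rightarrow> 'x::{comm_monoid_add,metric_space} \<Rightarrow> 'x) \<Rightarrow> ('x \<Rightarrow> 'x) \<Rightarrow> 'a measure \<Rightarrow> ('a \<Rightarrow> 'x) \<Rightarrow> 'x" where
  "X_integral sm P M f = (THE y. \<forall>s::nat \<Rightarrow> 'a \<Rightarrow> 'x.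
      ((\<forall>k. simple_X M (s k)) \<and>
       (\<exists>c C. \<forall>k. \<forall>t\<in>space M. dist (s k t) c \<le> C) \<and>
       (AE t in M. (\<lambda>k. s k t) \<longlonglongrightarrow> f t))
      \<longrightarrow> (\<lambda>k. simple_int sm P M (s k)) \<longlonglongrightarrow> y)"

definition set_X_integral ::
  "(real \<Rightarrow> 'x::{comm_monoid_add,metric_space} \<Rightarrow> 'x) \<Rightarrow> ('x \<Rightarrow> 'x) \<Rightarrow> 'a measure \<Rightarrow> 'a set \<Rightarrow> ('a \<Rightarrow> 'x) \<Rightarrow> 'x" where
  "set_X_integral sm P M Q f = X_integral sm P M (\<lambda>t. if t \<in> Q then f t else 0)"

definition rec_error :: "('w \<Rightarrow> 'z::metric_space) \<Rightarrow> 'w set \<Rightarrow> ('w \<Rightarrow> 'i) \<Rightarrow> ('i \<Rightarrow> 'z) \<Rightarrow> ereal" where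
  "rec_error \<Lambda> W I \<Phi> = (SUP w\<in>W. ereal (dist (\<Lambda> w) (\<Phi> (I w))))"

definition opt_rec_error :: "('w \<Rightarrow> 'z::metric_space) \<Rightarrow> 'w set \<Rightarrow> ('w \<Rightarrow> 'i) \<Rightarrow> ereal" where
  "opt_rec_error \<Lambda> W I = (INF \<Phi>. rec_error \<Lambda> W I \<Phi>)"

text \<open>The partition T_1,...,T_n (indices 0-based here).\<close>

definition vor_tilde :: "'a::metric_space set \<Rightarrow> 'a list \<Rightarrow> nat \<Rightarrow> 'a set" where
  "vor_tilde T xs i = {t\<in>T. \<forall>j<length xs. j \<noteq> i \<longrightarrow> dist t (xs ! i) \<le> dist t (xs ! j)}"

definition vor_part :: "'a::metric_space set \<Rightarrow> 'a list \<Rightarrow> nat \<Rightarrow> 'a set" where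
  "vor_part T xs j = vor_tilde T xs j - (\<Union>i<j. vor_tilde T xs i)"

end

theory Submission
  imports Defs
begin

text \<open>Write m(t) = min_i \<omega>(r(x_i, t)). Upper bound: the method \<Phi>* is the integral of the step
  function equal to f(x_i) on T_i \<inter> Q; the integral is 1-Lipschitz for the L1 distance against such
  step functions, and on T_i the point x_i is nearest to t, so h(f(t), f(x_i)) \<le> \<omega>(r(t, x_i)) = m(t).
  Lower bound: for a nonzero invertible convex e, with c = h(e, \<theta>) and B a bound for m, the functions
  ((B + m)/c) e and ((B - m)/c) e lie in H^\<omega>(T, X), carry the same information because m vanishes at
  the nodes, and have integrals at distance 2 \<integral>_Q m; any method therefore errs by at least
  \<integral>_Q m on one of them. The integral of a continuous function is computed as the limit
  of the integrals of its step approximations on the Voronoi cells of finer and finer nets of T.\<close>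

lemma modulus_of_continuity_mono:
  "modulus_of_continuity \<omega> \<Longrightarrow> 0 \<le> a \<Longrightarrow> a \<le> b \<Longrightarrow> \<omega> a \<le> \<omega> b"
  unfolding modulus_of_continuity_def mono_on_def by auto

lemma modulus_of_continuity_nonneg: "modulus_of_continuity \<omega> \<Longrightarrow> 0 \<le> a \<Longrightarrow> 0 \<le> \<omega> a"
  unfolding modulus_of_continuity_def by auto

lemma modulus_of_continuity_zero: "modulus_of_continuity \<omega> \<Longrightarrow> \<omega> 0 = 0"
  unfolding modulus_of_continuity_def by auto

lemma modulus_of_continuity_subadditive:
  "modulus_of_continuity \<omega> \<Longrightarrow> 0 \<le> a \<Longrightarrow> 0 \<le> b \<Longrightarrow> \<omega> (a + b) \<le> \<omega> a + \<omega> b"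
  unfolding modulus_of_continuity_def by auto

lemma Hclass_continuous_on:
  assumes \<omega>: "modulus_of_continuity \<omega>" and f: "f \<in> Hclass T \<omega>"
  shows "continuous_on T f"
  unfolding continuous_on_iff
proof (intro ballI allI impI)
  fix x and e :: real
  assume x: "x \<in> T" and "0 < e"
  have "continuous_on {0..} \<omega>"
    using \<omega> unfolding modulus_of_continuity_def by blast
  then obtain d where "0 < d" and d: "\<And>a. a \<in> {0..} \<Longrightarrow> dist a 0 < d \<Longrightarrow> dist (\<omega> a) (\<omega> 0) < e"
    using \<open>0 < e\<close> unfolding continuous_on_iff by (metis atLeast_iff order_refl)
  show "\<exists>d>0. \<forall>x'\<in>T. dist x' x < d \<longrightarrow> dist (f x') (f x) < e"
  proof (intro exI[of _ d] conjI ballI impI)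
    fix x' assume x': "x' \<in> T" and "dist x' x < d"
    then have "\<omega> (dist x' x) < e"
      using d[of "dist x' x"] modulus_of_continuity_zero[OF \<omega>]
        modulus_of_continuity_nonneg[OF \<omega>, of "dist x' x"]
      by (simp add: dist_real_def)
    moreover have "dist (f x') (f x) \<le> \<omega> (dist x' x)"
      using f x x' unfolding Hclass_def by blast
    ultimately show "dist (f x') (f x) < e" by linarith
  qed (fact \<open>0 < d\<close>)
qed

definition nearest :: "'a::metric_space list \<Rightarrow> 'a \<Rightarrow> nat" where
  "nearest zs t = (LEAST i. i < length zs \<and> (\<forall>j<length zs. dist t (zs ! i) \<le> dist t (zs ! j)))"

lemma nearest_minimal:
  assumes "zs \<noteq> []"
  shows "nearest zs t < length zs \<and> (\<forall>j<length zs. dist t (zs ! nearest zs t) \<le> dist t (zs ! j))"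
proof -
  let ?i = "arg_min_on (\<lambda>j. dist t (zs ! j)) {..<length zs}"
  have "{..<length zs} \<noteq> {}"
    using assms by (simp add: lessThan_empty_iff)
  then have "?i < length zs \<and> (\<forall>j<length zs. dist t (zs ! ?i) \<le> dist t (zs ! j))"
    using arg_min_if_finite[OF finite_lessThan, of "length zs" "\<lambda>j. dist t (zs ! j)"]
    by (auto simp: not_less)
  then show ?thesis
    unfolding nearest_def by (rule LeastI)
qed

lemma nearest_less_length: "zs \<noteq> [] \<Longrightarrow> nearest zs t < length zs"
  using nearest_minimal by blast

lemma nearest_mem: "zs \<noteq> [] \<Longrightarrow> zs ! nearest zs t \<in> set zs"
  using nearest_less_length nth_mem by blast

lemma dist_nearest_le:
  assumes "z \<in> set zs"
  shows "dist t (zs ! nearest zs t) \<le> dist t z"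
proof -
  obtain j where "j < length zs" "z = zs ! j"
    using assms by (auto simp: in_set_conv_nth)
  moreover have "zs \<noteq> []"
    using assms by auto
  ultimately show ?thesis
    using nearest_minimal[of zs t] by blast
qed

lemma mem_vor_part_iff:
  assumes "zs \<noteq> []" "i < length zs"
  shows "t \<in> vor_part T zs i \<longleftrightarrow> t \<in> T \<and> nearest zs t = i"
proof -
  define is_min where "is_min i \<longleftrightarrow> i < length zs \<and> (\<forall>j<length zs. dist t (zs ! i) \<le> dist t (zs ! j))"
    for i
  have tilde: "t \<in> vor_tilde T zs i' \<longleftrightarrow> t \<in> T \<and> is_min i'" if "i' \<le> i" for i'
    using that assms(2) unfolding vor_tilde_def is_min_def by (auto intro: order_refl)
  have "nearest zs t = i \<longleftrightarrow> is_min i \<and> (\<forall>i'<i. \<not> is_min i')"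
  proof
    assume "nearest zs t = i"
    then show "is_min i \<and> (\<forall>i'<i. \<not> is_min i')"
      using nearest_minimal[OF assms(1), of t] not_less_Least[of _ is_min]
      unfolding is_min_def nearest_def by blast
  next
    assume "is_min i \<and> (\<forall>i'<i. \<not> is_min i')"
    then show "nearest zs t = i"
      unfolding nearest_def is_min_def[symmetric]
      by (intro Least_equality) (auto simp: not_less[symmetric])
  qed
  then show ?thesis
    unfolding vor_part_def using tilde by auto
qed

definition min_modulus_dist :: "(real \<Rightarrow> real) \<Rightarrow> 'a::metric_space list \<Rightarrow> 'a \<Rightarrow> real" where
  "min_modulus_dist \<omega> xs t = Min ((\<lambda>x. \<omega> (dist x t)) ` set xs)"

lemma min_modulus_dist_le: "x \<in> set xs \<Longrightarrow> min_modulus_dist \<omega> xs t \<le> \<omega> (dist x t)"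
  unfolding min_modulus_dist_def by (rule Min_le) auto

lemma min_modulus_dist_nearest:
  assumes \<omega>: "modulus_of_continuity \<omega>" and "xs \<noteq> []"
  shows "min_modulus_dist \<omega> xs t = \<omega> (dist t (xs ! nearest xs t))"
  unfolding min_modulus_dist_def
proof (rule Min_eqI)
  fix y assume "y \<in> (\<lambda>x. \<omega> (dist x t)) ` set xs"
  then obtain x where "x \<in> set xs" "y = \<omega> (dist t x)"
    by (auto simp: dist_commute)
  then show "\<omega> (dist t (xs ! nearest xs t)) \<le> y"
    using modulus_of_continuity_mono[OF \<omega> zero_le_dist dist_nearest_le] by simp
qed (use nearest_mem[OF \<open>xs \<noteq> []\<close>] in \<open>auto simp: dist_commute\<close>)

lemma min_modulus_dist_nonneg:
  "modulus_of_continuity \<omega> \<Longrightarrow> xs \<noteq> [] \<Longrightarrow> 0 \<le> min_modulus_dist \<omega> xs t"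
  by (simp add: min_modulus_dist_nearest modulus_of_continuity_nonneg)

lemma min_modulus_dist_node:
  assumes \<omega>: "modulus_of_continuity \<omega>" and x: "x \<in> set xs"
  shows "min_modulus_dist \<omega> xs x = 0"
  using min_modulus_dist_le[OF x, of \<omega> x] min_modulus_dist_nonneg[OF \<omega>, of xs x] x
    modulus_of_continuity_zero[OF \<omega>]
  by force

lemma min_modulus_dist_in_Hclass:
  assumes \<omega>: "modulus_of_continuity \<omega>" and "xs \<noteq> []"
  shows "min_modulus_dist \<omega> xs \<in> Hclass T \<omega>"
proof -
  have le: "min_modulus_dist \<omega> xs s \<le> min_modulus_dist \<omega> xs t + \<omega> (dist s t)" for s t
  proof -
    let ?x = "xs ! nearest xs t"
    have "min_modulus_dist \<omega> xs s \<le> \<omega> (dist ?x s)"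
      by (rule min_modulus_dist_le[OF nearest_mem[OF \<open>xs \<noteq> []\<close>]])
    also have "\<dots> \<le> \<omega> (dist ?x t + dist t s)"
      by (intro modulus_of_continuity_mono[OF \<omega>] zero_le_dist dist_triangle)
    also have "\<dots> \<le> \<omega> (dist ?x t) + \<omega> (dist s t)"
      by (simp add: modulus_of_continuity_subadditive[OF \<omega>] dist_commute)
    finally show ?thesis
      using min_modulus_dist_nearest[OF assms] by (simp add: dist_commute)
  qed
  show ?thesis
    unfolding Hclass_def
  proof (intro CollectI ballI)
    fix s t :: 'a
    show "dist (min_modulus_dist \<omega> xs s) (min_modulus_dist \<omega> xs t) \<le> \<omega> (dist s t)"
      using le[of s t] le[of t s] by (simp add: dist_real_def dist_commute abs_le_iff)
  qed
qed

definition fine_nets :: "'a::metric_space set \<Rightarrow> (nat \<Rightarrow> 'a list) \<Rightarrow> bool" where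
  "fine_nets T zss \<longleftrightarrow>
     (\<forall>k. zss k \<noteq> [] \<and> set (zss k) \<subseteq> T \<and> (\<forall>t\<in>T. \<exists>z\<in>set (zss k). dist t z < inverse (Suc k)))"

lemma fine_nets_exist:
  assumes "compact T" "T \<noteq> {}"
  shows "\<exists>zss. fine_nets T zss"
proof -
  have "\<exists>zs. zs \<noteq> [] \<and> set zs \<subseteq> T \<and> (\<forall>t\<in>T. \<exists>z\<in>set zs. dist t z < inverse (Suc k))" for k
  proof -
    have "0 < inverse (real (Suc k))"
      by simp
    then have "\<exists>K. finite K \<and> K \<subseteq> T \<and> T \<subseteq> (\<Union>z\<in>K. ball z (inverse (Suc k)))"
      by (rule seq_compact_imp_totally_bounded[OF compact_imp_seq_compact[OF assms(1)], rule_format])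
    then obtain K where K: "finite K" "K \<subseteq> T" "T \<subseteq> (\<Union>z\<in>K. ball z (inverse (Suc k)))"
      by blast
    obtain zs where zs: "set zs = K"
      using finite_list[OF K(1)] by blast
    have "zs \<noteq> []"
      using zs K(3) assms(2) by auto
    moreover have "\<exists>z\<in>set zs. dist t z < inverse (Suc k)" if t: "t \<in> T" for t
    proof -
      obtain z where "z \<in> K" "t \<in> ball z (inverse (Suc k))"
        using K(3) t by blast
      then show ?thesis
        using zs by (auto simp: dist_commute)
    qed
    ultimately show ?thesis
      using zs K(2) by blast
  qed
  then show ?thesis
    unfolding fine_nets_def by (intro choice allI)
qed

lemma fine_nets_nearest_tendsto:
  assumes nets: "fine_nets T zss" and t: "t \<in> T"
  shows "(\<lambda>k. zss k ! nearest (zss k) t) \<longlonglongrightarrow> t"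
proof -
  have "dist (zss k ! nearest (zss k) t) t \<le> inverse (Suc k)" for k
  proof -
    obtain z where "z \<in> set (zss k)" "dist t z < inverse (Suc k)"
      using nets t unfolding fine_nets_def by blast
    then show ?thesis
      using dist_nearest_le[of z "zss k" t] by (simp add: dist_commute)
  qed
  then have "(\<lambda>k. dist (zss k ! nearest (zss k) t) t) \<longlonglongrightarrow> 0"
    by (intro Lim_null_comparison[OF always_eventually LIMSEQ_inverse_real_of_nat]) simp
  then show ?thesis
    by (rule tendsto_dist_iff[THEN iffD2])
qed

definition voronoi_step :: "'a set \<Rightarrow> 'a::metric_space list \<Rightarrow> ('a \<Rightarrow> 'y::zero) \<Rightarrow> 'a \<Rightarrow> 'y" where
  "voronoi_step Q zs F t = (if t \<in> Q then F (zs ! nearest zs t) else 0)"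

definition voronoi_label :: "'a set \<Rightarrow> 'a::metric_space list \<Rightarrow> 'a \<Rightarrow> nat option" where
  "voronoi_label Q zs t = (if t \<in> Q then Some (nearest zs t) else None)"

lemma voronoi_step_label: "voronoi_step Q zs F t = case_option 0 (\<lambda>i. F (zs ! i)) (voronoi_label Q zs t)"
  unfolding voronoi_step_def voronoi_label_def by simp

lemma voronoi_label_range:
  "zs \<noteq> [] \<Longrightarrow> voronoi_label Q zs ` A \<subseteq> insert None (Some ` {..<length zs})"
  using nearest_less_length by (auto simp: voronoi_label_def)

lemma sum_voronoi_labels:
  "(\<Sum>j\<in>insert None (Some ` {..<n::nat}). g j) = g None + (\<Sum>i<n. g (Some i))"
  by (subst sum.insert) (auto simp: sum.reindex)

locale L_space_convexifier =
  fixes sm :: "real \<Rightarrow> 'x::{comm_monoid_add,complete_space} \<Rightarrow> 'x" and P :: "'x \<Rightarrow> 'x"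
  assumes L_space: "L_space sm" and convexifying: "convexifying sm P"
begin

lemma sm_add_right: "sm a (x + y) = sm a x + sm a y"
  using L_space unfolding L_space_def semilinear_def by blast

lemma sm_sm: "sm a (sm b x) = sm (a * b) x"
  using L_space unfolding L_space_def semilinear_def by blast

lemma sm_zero_left [simp]: "sm 0 x = 0"
  using L_space unfolding L_space_def semilinear_def by blast

lemma sm_zero_right [simp]: "sm a 0 = 0"
  by (metis mult_zero_right sm_sm sm_zero_left)

lemma dist_sm: "dist (sm a x) (sm a y) = \<bar>a\<bar> * dist x y"
  using L_space unfolding L_space_def by blast

lemma dist_add_right_le: "dist (x + z) (y + z) \<le> dist x (y :: 'x)"
  using L_space unfolding L_space_def by blast

lemma dist_add_le: "dist (a + b) (c + d) \<le> dist a c + dist b (d :: 'x)"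
proof -
  have "dist (a + b) (c + d) \<le> dist (a + b) (c + b) + dist (b + c) (d + c)"
    using dist_triangle[of "a + b" "c + d" "c + b"] by (simp add: add.commute)
  then show ?thesis
    using dist_add_right_le[of a b c] dist_add_right_le[of b c d] by linarith
qed

lemma dist_sum_le: "dist (sum f A) (sum g A :: 'x) \<le> (\<Sum>i\<in>A. dist (f i) (g i))"
proof (induction A rule: infinite_finite_induct)
  case (insert i A)
  then show ?case
    using dist_add_le[of "f i" "sum f A" "g i" "sum g A"] by simp
qed auto

lemma dist_P_le: "dist (P x) (P y) \<le> dist x y"
  using convexifying unfolding convexifying_def by blast

lemma P_sm_add: "P (sm a x + sm b y) = sm a (P x) + sm b (P y)"
  using convexifying unfolding convexifying_def by blast

lemma P_zero [simp]: "P 0 = 0"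
  using P_sm_add[of 0 0 0 0] by simp

lemma P_sm: "P (sm a x) = sm a (P x)"
  using P_sm_add[of a x 0 x] by simp

lemma P_in_convex_elems: "P x \<in> convex_elems sm"
  using convexifying unfolding convexifying_def by blast

lemma P_convex_elem: "x \<in> convex_elems sm \<Longrightarrow> P x = x"
  using convexifying unfolding convexifying_def by (metis imageE)

lemma sm_add_left_convex:
  "x \<in> convex_elems sm \<Longrightarrow> 0 \<le> a \<Longrightarrow> 0 \<le> b \<Longrightarrow> sm (a + b) x = sm a x + sm b x"
  unfolding convex_elems_def by blast

lemma sm_sum_left_convex:
  assumes "x \<in> convex_elems sm" and "\<And>j. j \<in> J \<Longrightarrow> 0 \<le> a j"
  shows "sm (sum a J) x = (\<Sum>j\<in>J. sm (a j) x)"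
  using assms(2)
proof (induction J rule: infinite_finite_induct)
  case (insert j J)
  then have "sm (sum a (insert j J)) x = sm (a j) x + sm (sum a J) x"
    by (simp add: sm_add_left_convex[OF assms(1)] sum_nonneg)
  with insert show ?case
    by simp
qed auto

lemma dist_sm_convex_le:
  assumes "x \<in> convex_elems sm" "0 \<le> a" "0 \<le> b"
  shows "dist (sm a x) (sm b x) \<le> \<bar>a - b\<bar> * dist x 0"
proof -
  have le: "dist (sm a x) (sm b x) \<le> (a - b) * dist x 0" if "0 \<le> b" "b \<le> a" for a b
    using dist_add_right_le[of "sm (a - b) x" "sm b x" 0] sm_add_left_convex[OF assms(1), of "a - b" b]
      dist_sm[of "a - b" x 0] that
    by simp
  show ?thesis
  proof (cases "b \<le> a")
    case True
    then show ?thesis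
      using le[OF assms(3)] by simp
  next
    case False
    then show ?thesis
      using le[OF assms(2), of b] dist_commute[of "sm a x"] by simp
  qed
qed

lemma dist_sm_convex_inv:
  assumes "x \<in> convex_elems sm" "x \<in> inv_elems" "0 \<le> a" "0 \<le> b"
  shows "dist (sm a x) (sm b x) = \<bar>a - b\<bar> * dist x 0"
proof -
  have ge: "(a - b) * dist x 0 \<le> dist (sm a x) (sm b x)" if "0 \<le> b" "b \<le> a" for a b
  proof -
    obtain x' where "x + x' = 0"
      using assms(2) unfolding inv_elems_def by blast
    then have inverse: "sm b x + sm b x' = 0"
      by (metis sm_add_right sm_zero_right)
    have "sm a x + sm b x' = sm (a - b) x"
      using sm_add_left_convex[OF assms(1), of "a - b" b] that inverse by (simp add: add.assoc)
    then have "dist (sm (a - b) x) 0 \<le> dist (sm a x) (sm b x)"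
      using dist_add_right_le[of "sm a x" "sm b x'" "sm b x"] inverse by (simp add: add.commute)
    then show ?thesis
      using dist_sm[of "a - b" x 0] that by simp
  qed
  have "\<bar>a - b\<bar> * dist x 0 \<le> dist (sm a x) (sm b x)"
  proof (cases "b \<le> a")
    case True
    then show ?thesis
      using ge[OF assms(4)] by simp
  next
    case False
    then show ?thesis
      using ge[OF assms(3), of b] dist_commute[of "sm a x"] by simp
  qed
  then show ?thesis
    using dist_sm_convex_le[OF assms(1,3,4)] by linarith
qed

lemma lipschitz_on_sm_convex:
  assumes "x \<in> convex_elems sm"
  shows "(dist x 0)-lipschitz_on {0..} (\<lambda>a. sm a x)"
proof (rule lipschitz_onI)
  fix a b :: real assume "a \<in> {0..}" "b \<in> {0..}"
  then show "dist (sm a x) (sm b x) \<le> dist x 0 * dist a b"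
    using dist_sm_convex_le[OF assms] by (simp add: dist_real_def mult.commute)
qed simp

lemma continuous_on_sm_convex:
  assumes "x \<in> convex_elems sm" "continuous_on T \<phi>" "\<forall>t\<in>T. 0 \<le> \<phi> t"
  shows "continuous_on T (\<lambda>t. sm (\<phi> t) x)"
  by (rule continuous_on_compose2[OF lipschitz_on_continuous_on[OF lipschitz_on_sm_convex[OF assms(1)]]
        assms(2)])
    (use assms(3) in auto)

lemma tendsto_sm_convex:
  assumes "x \<in> convex_elems sm" "a \<longlonglongrightarrow> l" "\<forall>k. 0 \<le> a k" "0 \<le> l"
  shows "(\<lambda>k. sm (a k) x) \<longlonglongrightarrow> sm l x"
  using lipschitz_on_continuous_on[OF lipschitz_on_sm_convex[OF assms(1)]] assms(2)
  by (rule continuous_on_tendsto_compose) (use assms(3,4) in auto)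

lemma sm_convex_normalized_in_Hclass:
  assumes x: "x \<in> convex_elems sm" "x \<noteq> 0" and \<psi>: "\<psi> \<in> Hclass T \<omega>" "\<forall>t\<in>T. 0 \<le> \<psi> t"
  shows "(\<lambda>t. sm (\<psi> t / dist x 0) x) \<in> Hclass T \<omega>"
  unfolding Hclass_def
proof (intro CollectI ballI)
  fix s t assume s: "s \<in> T" and t: "t \<in> T"
  have "dist (sm (\<psi> s / dist x 0) x) (sm (\<psi> t / dist x 0) x)
      \<le> \<bar>\<psi> s / dist x 0 - \<psi> t / dist x 0\<bar> * dist x 0"
    using \<psi>(2) s t by (intro dist_sm_convex_le[OF x(1)]) auto
  also have "\<dots> = dist (\<psi> s) (\<psi> t)"
    using x(2) by (simp add: dist_real_def diff_divide_distrib[symmetric] abs_divide)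
  also have "\<dots> \<le> \<omega> (dist s t)"
    using \<psi>(1) s t unfolding Hclass_def by blast
  finally show "dist (sm (\<psi> s / dist x 0) x) (sm (\<psi> t / dist x 0) x) \<le> \<omega> (dist s t)" .
qed

end

lemma simple_X_iff_simple_function: "simple_X M s \<longleftrightarrow> simple_function M s"
  unfolding simple_X_def simple_function_def by (simp add: vimage_def Int_def conj_commute)

lemma simple_X_measurable: "simple_X M s \<Longrightarrow> s \<in> borel_measurable M"
  by (simp add: simple_X_iff_simple_function borel_measurable_simple_function)

lemma simple_X_bounded: "simple_X M s \<Longrightarrow> bounded (s ` space M)"
  unfolding simple_X_def by (simp add: finite_imp_bounded)

lemma simple_function_label:
  assumes "finite J" "\<kappa> ` space M \<subseteq> J" "\<And>j. j \<in> J \<Longrightarrow> {t\<in>space M. \<kappa> t = j} \<in> sets M"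
  shows "simple_function M \<kappa>"
  unfolding simple_function_def
proof
  show "finite (\<kappa> ` space M)"
    using assms(1,2) by (rule finite_subset[rotated])
  show "\<forall>j\<in>\<kappa> ` space M. \<kappa> -` {j} \<inter> space M \<in> sets M"
  proof
    fix j assume "j \<in> \<kappa> ` space M"
    moreover have "\<kappa> -` {j} \<inter> space M = {t\<in>space M. \<kappa> t = j}"
      by auto
    ultimately show "\<kappa> -` {j} \<inter> space M \<in> sets M"
      using assms(2,3) by auto
  qed
qed

lemma simple_X_label:
  assumes "finite J" "\<kappa> ` space M \<subseteq> J" "\<And>j. j \<in> J \<Longrightarrow> {t\<in>space M. \<kappa> t = j} \<in> sets M"
  shows "simple_X M (\<lambda>t. F (\<kappa> t))"
  using simple_function_compose[OF simple_function_label[OF assms], of F]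
  by (simp add: simple_X_iff_simple_function comp_def)

lemma measurable_dist_simple_X:
  assumes s: "simple_X M s" and g: "g \<in> borel_measurable M"
  shows "(\<lambda>t. dist (s t) (g t)) \<in> borel_measurable M"
proof -
  have sf: "simple_function M s"
    using s by (simp add: simple_X_iff_simple_function)
  then have s_count: "s \<in> measurable M (count_space (s ` space M))"
    by (auto simp: measurable_count_space_eq2 simple_functionD)
  have dist_meas: "(\<lambda>t. dist v (g t)) \<in> borel_measurable M" for v
    by (intro borel_measurable_continuous_on[OF _ g, of "dist v"] continuous_intros)
  have "(\<lambda>t. (\<lambda>v t. dist v (g t)) (s t) t) \<in> borel_measurable M"
    using dist_meas s_count countable_finite[OF simple_functionD(1)[OF sf]]
    by (rule measurable_compose_countable')
  then show ?thesis
    by simp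
qed

context finite_measure
begin

lemma integral_label:
  fixes h :: "'b \<Rightarrow> real"
  assumes "finite J" "\<kappa> ` space M \<subseteq> J" "\<And>j. j \<in> J \<Longrightarrow> {t\<in>space M. \<kappa> t = j} \<in> sets M"
  shows "integral\<^sup>L M (\<lambda>t. h (\<kappa> t)) = (\<Sum>j\<in>J. measure M {t\<in>space M. \<kappa> t = j} * h j)"
proof -
  let ?A = "\<lambda>j. {t\<in>space M. \<kappa> t = j}"
  have sum_integral: "has_bochner_integral M (\<lambda>t. \<Sum>j\<in>J. indicator (?A j) t *\<^sub>R h j)
      (\<Sum>j\<in>J. measure M (?A j) *\<^sub>R h j)"
    using assms(3) by (intro has_bochner_integral_sum has_bochner_integral_indicator)
      (auto simp: less_top[symmetric])
  have pointwise: "h (\<kappa> t) = (\<Sum>j\<in>J. indicator (?A j) t *\<^sub>R h j)" if "t \<in> space M" for t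
  proof -
    have "(\<Sum>j\<in>J. indicator (?A j) t *\<^sub>R h j) = (\<Sum>j\<in>J. if j = \<kappa> t then h j else 0)"
      using that by (intro sum.cong) (auto simp: indicator_def)
    also have "\<dots> = h (\<kappa> t)"
      using that assms(1,2) by (auto simp: sum.delta')
    finally show ?thesis
      by simp
  qed
  have "integral\<^sup>L M (\<lambda>t. h (\<kappa> t)) = integral\<^sup>L M (\<lambda>t. \<Sum>j\<in>J. indicator (?A j) t *\<^sub>R h j)"
    using pointwise by (rule Bochner_Integration.integral_cong[OF refl])
  also have "\<dots> = (\<Sum>j\<in>J. measure M (?A j) *\<^sub>R h j)"
    by (rule has_bochner_integral_integral_eq[OF sum_integral])
  finally show ?thesis
    by (simp only: real_scaleR_def)
qed

lemma integral_bounded_convergence: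
  fixes f :: "nat \<Rightarrow> 'a \<Rightarrow> real"
  assumes "\<And>k. f k \<in> borel_measurable M" and "g \<in> borel_measurable M"
    and bound: "\<And>k t. t \<in> space M \<Longrightarrow> \<bar>f k t\<bar> \<le> B"
    and "AE t in M. (\<lambda>k. f k t) \<longlonglongrightarrow> g t"
  shows "(\<lambda>k. integral\<^sup>L M (f k)) \<longlonglongrightarrow> integral\<^sup>L M g"
proof (rule integral_dominated_convergence[where w = "\<lambda>_. B"])
  show "AE t in M. norm (f k t) \<le> B" for k
    using bound by (intro AE_I2) simp
qed (fact assms integrable_const)+

lemma integrable_dist_simple_X:
  assumes s: "simple_X M s" and g: "g \<in> borel_measurable M" "bounded (g ` space M)"
  shows "integrable M (\<lambda>t. dist (s t) (g t))"
proof (rule integrable_const_bound[where B = "diameter (s ` space M \<union> g ` space M)"])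
  have "bounded (s ` space M \<union> g ` space M)"
    using simple_X_bounded[OF s] g(2) by simp
  then show "AE t in M. norm (dist (s t) (g t)) \<le> diameter (s ` space M \<union> g ` space M)"
    by (intro AE_I2) (simp add: diameter_bounded_bound)
qed (rule measurable_dist_simple_X[OF s g(1)])

end

definition approximating_seq :: "'a measure \<Rightarrow> ('a \<Rightarrow> 'x::metric_space) \<Rightarrow> (nat \<Rightarrow> 'a \<Rightarrow> 'x) \<Rightarrow> bool" where
  "approximating_seq M g s \<longleftrightarrow> (\<forall>k. simple_X M (s k)) \<and>
     (\<exists>c C. \<forall>k. \<forall>t\<in>space M. dist (s k t) c \<le> C) \<and> (AE t in M. (\<lambda>k. s k t) \<longlonglongrightarrow> g t)"

lemma X_integral_eq_The:
  "X_integral sm P M g =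
     (THE y. \<forall>s. approximating_seq M g s \<longrightarrow> (\<lambda>k. simple_int sm P M (s k)) \<longlonglongrightarrow> y)"
  unfolding X_integral_def approximating_seq_def ..

lemma approximating_seq_simple: "approximating_seq M g s \<Longrightarrow> simple_X M (s k)"
  unfolding approximating_seq_def by blast

lemma approximating_seq_bounded: "approximating_seq M g s \<Longrightarrow> bounded (\<Union>k. s k ` space M)"
  unfolding approximating_seq_def bounded_def by (metis (mono_tags, lifting) UN_E dist_commute imageE)

lemma (in finite_measure) tendsto_integral_dist_approximating:
  assumes s: "approximating_seq M g s"
    and h: "h \<in> borel_measurable M" "bounded (h ` space M)"
    and gh: "(\<lambda>t. dist (g t) (h t)) \<in> borel_measurable M"
  shows "(\<lambda>k. integral\<^sup>L M (\<lambda>t. dist (s k t) (h t))) \<longlonglongrightarrow> integral\<^sup>L M (\<lambda>t. dist (g t) (h t))"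
proof (rule integral_bounded_convergence[OF _ gh])
  let ?S = "(\<Union>k. s k ` space M) \<union> h ` space M"
  have "bounded ?S"
    using approximating_seq_bounded[OF s] h(2) by simp
  then show "\<bar>dist (s k t) (h t)\<bar> \<le> diameter ?S" if "t \<in> space M" for k t
    using that by (auto intro!: diameter_bounded_bound)
  show "(\<lambda>t. dist (s k t) (h t)) \<in> borel_measurable M" for k
    by (rule measurable_dist_simple_X[OF approximating_seq_simple[OF s] h(1)])
  have "AE t in M. (\<lambda>k. s k t) \<longlonglongrightarrow> g t"
    using s by (simp add: approximating_seq_def)
  then show "AE t in M. (\<lambda>k. dist (s k t) (h t)) \<longlonglongrightarrow> dist (g t) (h t)"
    by eventually_elim (intro tendsto_intros)
qed

locale convexified_finite_measure = L_space_convexifier sm P + finite_measure M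
  for sm :: "real \<Rightarrow> 'x::{comm_monoid_add,complete_space} \<Rightarrow> 'x" and P and M :: "'a measure"
begin

lemma simple_int_label:
  assumes J: "finite J" "\<kappa> ` space M \<subseteq> J"
    and A: "\<And>j. j \<in> J \<Longrightarrow> {t\<in>space M. \<kappa> t = j} \<in> sets M"
  shows "simple_int sm P M (\<lambda>t. F (\<kappa> t)) = (\<Sum>j\<in>J. sm (measure M {t\<in>space M. \<kappa> t = j}) (P (F j)))"
proof -
  let ?A = "\<lambda>j. {t\<in>space M. \<kappa> t = j}"
  let ?g = "\<lambda>v. sm (measure M {t\<in>space M. F (\<kappa> t) = v}) (P v)"
  have "simple_int sm P M (\<lambda>t. F (\<kappa> t)) = (\<Sum>v\<in>F ` \<kappa> ` space M. ?g v)"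
    unfolding simple_int_def by (simp add: image_image)
  also have "\<dots> = (\<Sum>v\<in>F ` J. ?g v)"
  proof (rule sum.mono_neutral_left)
    show "\<forall>v\<in>F ` J - F ` \<kappa> ` space M. ?g v = 0"
    proof
      fix v assume "v \<in> F ` J - F ` \<kappa> ` space M"
      then have "{t\<in>space M. F (\<kappa> t) = v} = {}"
        by blast
      then show "?g v = 0"
        by (simp only: measure_empty sm_zero_left)
    qed
  qed (use J in auto)
  also have "\<dots> = (\<Sum>v\<in>F ` J. \<Sum>j\<in>{j\<in>J. F j = v}. sm (measure M (?A j)) (P (F j)))"
  proof (rule sum.cong[OF refl])
    fix v
    have "{t\<in>space M. F (\<kappa> t) = v} = (\<Union>j\<in>{j\<in>J. F j = v}. ?A j)"
      using J(2) by auto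
    then have "measure M {t\<in>space M. F (\<kappa> t) = v} = (\<Sum>j\<in>{j\<in>J. F j = v}. measure M (?A j))"
      using J(1) A by (auto intro!: finite_measure_finite_Union simp: disjoint_family_on_def)
    then have "?g v = (\<Sum>j\<in>{j\<in>J. F j = v}. sm (measure M (?A j)) (P v))"
      by (simp add: sm_sum_left_convex[OF P_in_convex_elems])
    also have "\<dots> = (\<Sum>j\<in>{j\<in>J. F j = v}. sm (measure M (?A j)) (P (F j)))"
      by (rule sum.cong) auto
    finally show "?g v = \<dots>" .
  qed
  also have "\<dots> = (\<Sum>j\<in>J. sm (measure M (?A j)) (P (F j)))"
    using J(1) by (rule sum.image_gen[symmetric])
  finally show ?thesis .
qed

lemma dist_simple_int_le:
  assumes s: "simple_X M s" and s': "simple_X M s'"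
  shows "dist (simple_int sm P M s) (simple_int sm P M s') \<le> integral\<^sup>L M (\<lambda>t. dist (s t) (s' t))"
proof -
  define J where "J = s ` space M \<times> s' ` space M"
  define \<kappa> where "\<kappa> t = (s t, s' t)" for t
  let ?A = "\<lambda>j. {t\<in>space M. \<kappa> t = j}"
  have J: "finite J" "\<kappa> ` space M \<subseteq> J"
    using s s' by (auto simp: J_def \<kappa>_def simple_X_def)
  have A: "?A j \<in> sets M" if "j \<in> J" for j
  proof -
    have "?A j = {t\<in>space M. s t = fst j} \<inter> {t\<in>space M. s' t = snd j}"
      by (auto simp: \<kappa>_def)
    then show ?thesis
      using that s s' unfolding J_def simple_X_def by auto
  qed
  have components: "(\<lambda>t. fst (\<kappa> t)) = s" "(\<lambda>t. snd (\<kappa> t)) = s'"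
    "(\<lambda>t. dist (fst (\<kappa> t)) (snd (\<kappa> t))) = (\<lambda>t. dist (s t) (s' t))"
    by (simp_all add: \<kappa>_def)
  have "dist (simple_int sm P M s) (simple_int sm P M s') =
      dist (\<Sum>j\<in>J. sm (measure M (?A j)) (P (fst j))) (\<Sum>j\<in>J. sm (measure M (?A j)) (P (snd j)))"
    using simple_int_label[OF J A, where F = fst] simple_int_label[OF J A, where F = snd]
    unfolding components by (rule arg_cong2[where f = dist])
  also have "\<dots> \<le> (\<Sum>j\<in>J. dist (sm (measure M (?A j)) (P (fst j))) (sm (measure M (?A j)) (P (snd j))))"
    by (rule dist_sum_le)
  also have "\<dots> \<le> (\<Sum>j\<in>J. measure M (?A j) * dist (fst j) (snd j))"
    using mult_left_mono[OF dist_P_le measure_nonneg] by (intro sum_mono) (simp add: dist_sm)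
  also have "\<dots> = integral\<^sup>L M (\<lambda>t. dist (s t) (s' t))"
    using integral_label[OF J A, where h = "\<lambda>j. dist (fst j) (snd j)"] unfolding components ..
  finally show ?thesis .
qed

lemma dist_simple_int_approximating_le:
  assumes s: "approximating_seq M g s" and s': "approximating_seq M g s'"
    and g: "g \<in> borel_measurable M" "bounded (g ` space M)"
  shows "dist (simple_int sm P M (s k)) (simple_int sm P M (s' m))
    \<le> integral\<^sup>L M (\<lambda>t. dist (s k t) (g t)) + integral\<^sup>L M (\<lambda>t. dist (s' m t) (g t))"
proof -
  have simple: "simple_X M (s k)" "simple_X M (s' m)"
    using s s' by (simp_all add: approximating_seq_simple)
  have integrable: "integrable M (\<lambda>t. dist (s k t) (g t))" "integrable M (\<lambda>t. dist (s' m t) (g t))"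
    using simple g by (simp_all add: integrable_dist_simple_X)
  have "dist (simple_int sm P M (s k)) (simple_int sm P M (s' m))
      \<le> integral\<^sup>L M (\<lambda>t. dist (s k t) (s' m t))"
    by (rule dist_simple_int_le[OF simple])
  also have "\<dots> \<le> integral\<^sup>L M (\<lambda>t. dist (s k t) (g t) + dist (s' m t) (g t))"
    using integrable_dist_simple_X[OF simple(1) simple_X_measurable simple_X_bounded, OF simple(2,2)]
    by (intro integral_mono Bochner_Integration.integrable_add integrable dist_triangle2)
  also have "\<dots> = integral\<^sup>L M (\<lambda>t. dist (s k t) (g t)) + integral\<^sup>L M (\<lambda>t. dist (s' m t) (g t))"
    using integrable by simp
  finally show ?thesis .
qed

lemma tendsto_integral_dist_approximating_0:
  assumes "approximating_seq M g s" "g \<in> borel_measurable M" "bounded (g ` space M)"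
  shows "(\<lambda>k. integral\<^sup>L M (\<lambda>t. dist (s k t) (g t))) \<longlonglongrightarrow> 0"
  using tendsto_integral_dist_approximating[OF assms] by simp

lemma Cauchy_simple_int_approximating:
  assumes g: "g \<in> borel_measurable M" "bounded (g ` space M)" and s: "approximating_seq M g s"
  shows "Cauchy (\<lambda>k. simple_int sm P M (s k))"
proof (rule metric_CauchyI)
  fix \<epsilon> :: real assume "0 < \<epsilon>"
  then obtain N where N: "\<And>k. N \<le> k \<Longrightarrow> integral\<^sup>L M (\<lambda>t. dist (s k t) (g t)) < \<epsilon> / 2"
    using order_tendstoD(2)[OF tendsto_integral_dist_approximating_0[OF s g], of "\<epsilon> / 2"]
    by (auto simp: eventually_sequentially)
  have "dist (simple_int sm P M (s m)) (simple_int sm P M (s n)) < \<epsilon>" if "N \<le> m" "N \<le> n" for m n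
    using dist_simple_int_approximating_le[OF s s g, of m n] N[OF that(1)] N[OF that(2)]
    by linarith
  then show "\<exists>N. \<forall>m\<ge>N. \<forall>n\<ge>N. dist (simple_int sm P M (s m)) (simple_int sm P M (s n)) < \<epsilon>"
    by blast
qed

lemma tendsto_simple_int_approximating:
  assumes g: "g \<in> borel_measurable M" "bounded (g ` space M)"
    and s0: "approximating_seq M g s0" "(\<lambda>k. simple_int sm P M (s0 k)) \<longlonglongrightarrow> y"
    and s: "approximating_seq M g s"
  shows "(\<lambda>k. simple_int sm P M (s k)) \<longlonglongrightarrow> y"
proof -
  let ?e = "\<lambda>s k. integral\<^sup>L M (\<lambda>t. dist (s k t) (g t))"
  let ?b = "\<lambda>k. ?e s k + ?e s0 k + dist (simple_int sm P M (s0 k)) y"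
  have "norm (dist (simple_int sm P M (s k)) y) \<le> ?b k" for k
    using dist_simple_int_approximating_le[OF s s0(1) g, of k k]
      dist_triangle[of "simple_int sm P M (s k)" y "simple_int sm P M (s0 k)"]
    unfolding real_norm_def abs_of_nonneg[OF zero_le_dist] by linarith
  then have bound: "\<forall>k. norm (dist (simple_int sm P M (s k)) y) \<le> ?b k"
    by blast
  have "?b \<longlonglongrightarrow> 0 + 0 + 0"
    using tendsto_integral_dist_approximating_0[OF s g] tendsto_integral_dist_approximating_0[OF s0(1) g]
      tendsto_dist_iff[THEN iffD1, OF s0(2)]
    by (rule tendsto_add[OF tendsto_add])
  then have "?b \<longlonglongrightarrow> 0"
    by (simp only: add_0_left)
  then have "(\<lambda>k. dist (simple_int sm P M (s k)) y) \<longlonglongrightarrow> 0"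
    by (rule Lim_null_comparison[OF always_eventually[OF bound]])
  then show ?thesis
    by (rule tendsto_dist_iff[THEN iffD2])
qed

lemma tendsto_X_integral:
  assumes g: "g \<in> borel_measurable M" "bounded (g ` space M)"
    and s0: "approximating_seq M g s0" and s: "approximating_seq M g s"
  shows "(\<lambda>k. simple_int sm P M (s k)) \<longlonglongrightarrow> X_integral sm P M g"
proof -
  obtain y where y: "(\<lambda>k. simple_int sm P M (s0 k)) \<longlonglongrightarrow> y"
    using convergentD[OF Cauchy_convergent[OF Cauchy_simple_int_approximating[OF g s0]]] by (elim exE)
  have all: "(\<lambda>k. simple_int sm P M (s' k)) \<longlonglongrightarrow> y" if "approximating_seq M g s'" for s'
    by (rule tendsto_simple_int_approximating[OF g s0 y that])
  have "X_integral sm P M g = y"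
    unfolding X_integral_eq_The
    by (rule the_equality) (use all s0 y LIMSEQ_unique in blast)+
  with all[OF s] show ?thesis
    by simp
qed

lemma dist_X_integral_simple_le:
  assumes g: "g \<in> borel_measurable M" "bounded (g ` space M)"
    and s: "approximating_seq M g s" and q: "simple_X M q"
  shows "dist (X_integral sm P M g) (simple_int sm P M q) \<le> integral\<^sup>L M (\<lambda>t. dist (g t) (q t))"
proof (rule LIMSEQ_le)
  show "(\<lambda>k. dist (simple_int sm P M (s k)) (simple_int sm P M q))
      \<longlonglongrightarrow> dist (X_integral sm P M g) (simple_int sm P M q)"
    by (intro tendsto_dist tendsto_X_integral[OF g s s] tendsto_const)
  have "(\<lambda>t. dist (g t) (q t)) \<in> borel_measurable M"
    using measurable_dist_simple_X[OF q g(1)] by (simp add: dist_commute)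
  then show "(\<lambda>k. integral\<^sup>L M (\<lambda>t. dist (s k t) (q t))) \<longlonglongrightarrow> integral\<^sup>L M (\<lambda>t. dist (g t) (q t))"
    by (rule tendsto_integral_dist_approximating[OF s simple_X_measurable[OF q] simple_X_bounded[OF q]])
  show "\<exists>N. \<forall>k\<ge>N. dist (simple_int sm P M (s k)) (simple_int sm P M q)
      \<le> integral\<^sup>L M (\<lambda>t. dist (s k t) (q t))"
    using dist_simple_int_le[OF approximating_seq_simple[OF s] q] by blast
qed

end

locale compact_borel_measure = finite_measure M
  for M :: "'a::metric_space measure" +
  fixes T Q :: "'a set"
  assumes space_eq: "space M = T" and sets_eq: "sets M = sets (restrict_space borel T)"
    and compact_T: "compact T" and nonempty_T: "T \<noteq> {}"
    and Q_subset: "Q \<subseteq> T" and closed_Q: "closed Q"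
begin

lemma borel_Int_T_sets: "C \<in> sets borel \<Longrightarrow> C \<inter> T \<in> sets M"
  unfolding sets_eq sets_restrict_space by blast

lemma Q_sets: "Q \<in> sets M"
  using borel_Int_T_sets[of Q] closed_Q Q_subset by (simp add: Int_absorb2)

lemma vor_part_sets: "vor_part T zs i \<in> sets M"
proof -
  have "vor_tilde T zs j = (\<Inter>l\<in>{l. l < length zs \<and> l \<noteq> j}. {t. dist t (zs ! j) \<le> dist t (zs ! l)}) \<inter> T"
    for j
    unfolding vor_tilde_def by auto
  moreover have "closed (\<Inter>l\<in>{l. l < length zs \<and> l \<noteq> j}. {t. dist t (zs ! j) \<le> dist t (zs ! l)})" for j
    by (intro closed_INT ballI closed_Collect_le continuous_intros)
  ultimately have "vor_tilde T zs j \<in> sets M" for j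
    by (simp add: borel_Int_T_sets)
  then show ?thesis
    unfolding vor_part_def by (intro sets.Diff sets.finite_UN) auto
qed

lemma voronoi_label_level_sets:
  assumes "zs \<noteq> []"
  shows "{t\<in>space M. voronoi_label Q zs t = None} = space M - Q"
    and "i < length zs \<Longrightarrow> {t\<in>space M. voronoi_label Q zs t = Some i} = vor_part T zs i \<inter> Q"
  using mem_vor_part_iff[OF assms] space_eq by (auto simp: voronoi_label_def)

lemma voronoi_label_sets:
  assumes "zs \<noteq> []" "j \<in> insert None (Some ` {..<length zs})"
  shows "{t\<in>space M. voronoi_label Q zs t = j} \<in> sets M"
  using assms voronoi_label_level_sets[OF assms(1)] Q_sets vor_part_sets by auto

lemma simple_X_voronoi_step:
  assumes "zs \<noteq> []"
  shows "simple_X M (voronoi_step Q zs F)"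
  unfolding voronoi_step_label[abs_def]
  by (rule simple_X_label[OF _ voronoi_label_range[OF assms] voronoi_label_sets[OF assms]]) auto

lemma integral_voronoi_step:
  assumes "zs \<noteq> []"
  shows "integral\<^sup>L M (voronoi_step Q zs \<phi>)
    = (\<Sum>i<length zs. measure M (vor_part T zs i \<inter> Q) * \<phi> (zs ! i))"
proof -
  let ?J = "insert None (Some ` {..<length zs})"
  have "integral\<^sup>L M (voronoi_step Q zs \<phi>)
      = integral\<^sup>L M (\<lambda>t. case_option 0 (\<lambda>i. \<phi> (zs ! i)) (voronoi_label Q zs t))"
    unfolding voronoi_step_label ..
  also have "\<dots> = (\<Sum>j\<in>?J. measure M {t\<in>space M. voronoi_label Q zs t = j}
      * case_option 0 (\<lambda>i. \<phi> (zs ! i)) j)"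
    by (rule integral_label[OF _ voronoi_label_range[OF assms] voronoi_label_sets[OF assms]]) simp
  also have "\<dots> = (\<Sum>i<length zs. measure M (vor_part T zs i \<inter> Q) * \<phi> (zs ! i))"
    unfolding sum_voronoi_labels by (simp add: voronoi_label_level_sets[OF assms])
  finally show ?thesis .
qed

lemma continuous_on_measurable: "continuous_on T F \<Longrightarrow> F \<in> borel_measurable M"
  using borel_measurable_continuous_on_restrict measurable_cong_sets[OF sets_eq refl] by blast

lemma restrict_measurable:
  "continuous_on T F \<Longrightarrow> (\<lambda>t. if t \<in> Q then F t else 0) \<in> borel_measurable M"
  using Q_sets by (intro measurable_If_set continuous_on_measurable) auto

lemma restrict_bounded:
  assumes "continuous_on T F"
  shows "bounded ((\<lambda>t. if t \<in> Q then F t else 0) ` space M)"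
proof -
  have "bounded (F ` T)"
    using compact_imp_bounded[OF compact_continuous_image[OF assms compact_T]] .
  moreover have "(\<lambda>t. if t \<in> Q then F t else 0) ` space M \<subseteq> insert 0 (F ` T)"
    using space_eq by auto
  ultimately show ?thesis
    by (metis bounded_insert bounded_subset)
qed

lemma approximating_seq_voronoi_step:
  assumes nets: "fine_nets T zss" and F: "continuous_on T F"
  shows "approximating_seq M (\<lambda>t. if t \<in> Q then F t else 0) (\<lambda>k. voronoi_step Q (zss k) F)"
proof -
  have zss: "zss k \<noteq> []" "set (zss k) \<subseteq> T" for k
    using nets by (auto simp: fine_nets_def)
  have step_values: "voronoi_step Q (zss k) F t \<in> insert 0 (F ` T)" for k t
    using nearest_mem[OF zss(1), of k t] zss(2)[of k] by (auto simp: voronoi_step_def)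
  obtain C where C: "\<forall>x\<in>insert 0 (F ` T). dist 0 x \<le> C"
    using restrict_bounded[OF F] compact_imp_bounded[OF compact_continuous_image[OF F compact_T]]
    by (metis bounded_any_center bounded_insert)
  have convergence: "(\<lambda>k. voronoi_step Q (zss k) F t) \<longlonglongrightarrow> (if t \<in> Q then F t else 0)"
    if "t \<in> space M" for t
  proof (cases "t \<in> Q")
    case True
    have "t \<in> T"
      using that space_eq by simp
    have "\<forall>k. zss k ! nearest (zss k) t \<in> T"
      using nearest_mem[OF zss(1)] zss(2) by blast
    then have "(\<lambda>k. F (zss k ! nearest (zss k) t)) \<longlonglongrightarrow> F t"
      using continuous_on_tendsto_compose[OF F fine_nets_nearest_tendsto[OF nets \<open>t \<in> T\<close>] \<open>t \<in> T\<close>]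
      by (simp add: always_eventually)
    with True show ?thesis
      by (simp add: voronoi_step_def)
  qed (simp add: voronoi_step_def)
  have "\<forall>k. \<forall>t\<in>space M. dist (voronoi_step Q (zss k) F t) 0 \<le> C"
    using C step_values dist_commute by metis
  then show ?thesis
    unfolding approximating_seq_def
    by (intro conjI allI exI simple_X_voronoi_step zss AE_I2 convergence) auto
qed

lemma integrable_restrict_continuous:
  fixes \<phi> :: "'a \<Rightarrow> real"
  assumes "continuous_on T \<phi>"
  shows "integrable M (\<lambda>t. if t \<in> Q then \<phi> t else 0)"
proof -
  obtain B where "\<forall>x\<in>(\<lambda>t. if t \<in> Q then \<phi> t else 0) ` space M. \<bar>x\<bar> \<le> B"
    using restrict_bounded[OF assms] by (auto simp: bounded_real)
  then show ?thesis
    by (intro integrable_const_bound[where B = B] AE_I2 restrict_measurable assms) auto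
qed

lemma set_integral_restrict: "(LINT t:Q|M. \<phi> t) = integral\<^sup>L M (\<lambda>t. if t \<in> Q then \<phi> t else (0::real))"
  unfolding set_lebesgue_integral_def indicator_scaleR_eq_if ..

lemma set_integrable_continuous: "continuous_on T \<phi> \<Longrightarrow> set_integrable M Q (\<phi> :: 'a \<Rightarrow> real)"
  unfolding set_integrable_def indicator_scaleR_eq_if by (rule integrable_restrict_continuous)

lemma set_integral_nonneg_on:
  fixes \<phi> :: "'a \<Rightarrow> real"
  assumes "\<forall>t\<in>T. 0 \<le> \<phi> t"
  shows "0 \<le> (LINT t:Q|M. \<phi> t)"
  unfolding set_integral_restrict using assms Q_subset
  by (auto intro!: Bochner_Integration.integral_nonneg)

lemma tendsto_integral_voronoi_step:
  fixes \<phi> :: "'a \<Rightarrow> real"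
  assumes nets: "fine_nets T zss" and \<phi>: "continuous_on T \<phi>"
  shows "(\<lambda>k. integral\<^sup>L M (voronoi_step Q (zss k) \<phi>)) \<longlonglongrightarrow> (LINT t:Q|M. \<phi> t)"
proof -
  have approx: "approximating_seq M (\<lambda>t. if t \<in> Q then \<phi> t else 0) (\<lambda>k. voronoi_step Q (zss k) \<phi>)"
    by (rule approximating_seq_voronoi_step[OF nets \<phi>])
  obtain B where B: "\<forall>x\<in>(\<Union>k. voronoi_step Q (zss k) \<phi> ` space M). \<bar>x\<bar> \<le> B"
    using approximating_seq_bounded[OF approx] by (auto simp: bounded_real)
  show ?thesis
    unfolding set_integral_restrict
  proof (rule integral_bounded_convergence)
    show "voronoi_step Q (zss k) \<phi> \<in> borel_measurable M" for k
      by (rule simple_X_measurable[OF approximating_seq_simple[OF approx]])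
    show "(\<lambda>t. if t \<in> Q then \<phi> t else 0) \<in> borel_measurable M"
      by (rule restrict_measurable[OF \<phi>])
    show "\<bar>voronoi_step Q (zss k) \<phi> t\<bar> \<le> B" if "t \<in> space M" for k t
      using B that by blast
    show "AE t in M. (\<lambda>k. voronoi_step Q (zss k) \<phi> t) \<longlonglongrightarrow> (if t \<in> Q then \<phi> t else 0)"
      using approx by (simp add: approximating_seq_def)
  qed
qed

end

lemma rec_error_ge_half_dist:
  assumes "w1 \<in> W" "w2 \<in> W" "I w1 = I w2"
  shows "ereal (dist (\<Lambda> w1) (\<Lambda> w2) / 2) \<le> rec_error \<Lambda> W I \<Phi>"
proof -
  have error: "ereal (dist (\<Lambda> w) (\<Phi> (I w1))) \<le> rec_error \<Lambda> W I \<Phi>" if "w \<in> W" "I w = I w1" for w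
    unfolding rec_error_def using that by (auto intro: SUP_upper2)
  have "dist (\<Lambda> w1) (\<Lambda> w2) / 2 \<le> dist (\<Lambda> w1) (\<Phi> (I w1))
      \<or> dist (\<Lambda> w1) (\<Lambda> w2) / 2 \<le> dist (\<Lambda> w2) (\<Phi> (I w1))"
    using dist_triangle2[of "\<Lambda> w1" "\<Lambda> w2" "\<Phi> (I w1)"] by linarith
  then show ?thesis
    using error[OF assms(1) refl] error[OF assms(2) assms(3)[symmetric]]
    by (metis ereal_less_eq(3) order_trans)
qed

lemma opt_rec_error_eqI:
  assumes upper: "rec_error \<Lambda> W I \<Phi> \<le> R" and lower: "\<And>\<Phi>'. R \<le> rec_error \<Lambda> W I \<Phi>'"
  shows "opt_rec_error \<Lambda> W I = R \<and> rec_error \<Lambda> W I \<Phi> = opt_rec_error \<Lambda> W I"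
proof -
  have "opt_rec_error \<Lambda> W I \<le> rec_error \<Lambda> W I \<Phi>"
    unfolding opt_rec_error_def by (rule INF_lower) simp
  moreover have "R \<le> opt_rec_error \<Lambda> W I"
    unfolding opt_rec_error_def by (rule INF_greatest) (rule lower)
  ultimately show ?thesis
    using upper by auto
qed

locale recovery_setting = convexified_finite_measure sm P M + compact_borel_measure M T Q
  for sm :: "real \<Rightarrow> 'x::{comm_monoid_add,complete_space} \<Rightarrow> 'x" and P
    and M :: "'a::metric_space measure" and T Q
begin

lemma simple_int_voronoi_step:
  assumes "zs \<noteq> []"
  shows "simple_int sm P M (voronoi_step Q zs F)
    = (\<Sum>i<length zs. sm (measure M (vor_part T zs i \<inter> Q)) (P (F (zs ! i))))"
proof -
  let ?J = "insert None (Some ` {..<length zs})"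
  have "simple_int sm P M (voronoi_step Q zs F)
      = simple_int sm P M (\<lambda>t. case_option 0 (\<lambda>i. F (zs ! i)) (voronoi_label Q zs t))"
    unfolding voronoi_step_label ..
  also have "\<dots> = (\<Sum>j\<in>?J. sm (measure M {t\<in>space M. voronoi_label Q zs t = j})
      (P (case_option 0 (\<lambda>i. F (zs ! i)) j)))"
    by (rule simple_int_label[OF _ voronoi_label_range[OF assms] voronoi_label_sets[OF assms]]) simp
  also have "\<dots> = (\<Sum>i<length zs. sm (measure M (vor_part T zs i \<inter> Q)) (P (F (zs ! i))))"
    unfolding sum_voronoi_labels by (simp add: voronoi_label_level_sets[OF assms])
  finally show ?thesis .
qed

lemma set_X_integral_voronoi_tendsto:
  assumes "fine_nets T zss" "continuous_on T F"
  shows "(\<lambda>k. simple_int sm P M (voronoi_step Q (zss k) F)) \<longlonglongrightarrow> set_X_integral sm P M Q F"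
  unfolding set_X_integral_def
  using approximating_seq_voronoi_step[OF assms]
  by (intro tendsto_X_integral restrict_measurable restrict_bounded assms(2))

lemma dist_set_X_integral_simple_le:
  assumes f: "continuous_on T f" and q: "simple_X M q"
  shows "dist (set_X_integral sm P M Q f) (simple_int sm P M q)
    \<le> integral\<^sup>L M (\<lambda>t. dist (if t \<in> Q then f t else 0) (q t))"
proof -
  obtain zss where "fine_nets T zss"
    using fine_nets_exist[OF compact_T nonempty_T] by blast
  then show ?thesis
    unfolding set_X_integral_def
    by (intro dist_X_integral_simple_le[OF _ _ approximating_seq_voronoi_step] restrict_measurable
        restrict_bounded f q)
qed

lemma simple_int_voronoi_step_sm_convex:
  assumes x: "x \<in> convex_elems sm" and \<phi>: "\<forall>t\<in>T. 0 \<le> \<phi> t" and zs: "zs \<noteq> []" "set zs \<subseteq> T"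
  shows "simple_int sm P M (voronoi_step Q zs (\<lambda>t. sm (\<phi> t) x))
    = sm (integral\<^sup>L M (voronoi_step Q zs \<phi>)) x"
proof -
  let ?\<mu> = "\<lambda>i. measure M (vor_part T zs i \<inter> Q)"
  have "simple_int sm P M (voronoi_step Q zs (\<lambda>t. sm (\<phi> t) x))
      = (\<Sum>i<length zs. sm (?\<mu> i) (P (sm (\<phi> (zs ! i)) x)))"
    by (rule simple_int_voronoi_step[OF zs(1)])
  also have "\<dots> = (\<Sum>i<length zs. sm (?\<mu> i * \<phi> (zs ! i)) x)"
    by (simp add: P_sm P_convex_elem[OF x] sm_sm)
  also have "\<dots> = sm (\<Sum>i<length zs. ?\<mu> i * \<phi> (zs ! i)) x"
    using zs(2) \<phi> nth_mem
    by (intro sm_sum_left_convex[OF x, symmetric] mult_nonneg_nonneg measure_nonneg) blast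
  also have "\<dots> = sm (integral\<^sup>L M (voronoi_step Q zs \<phi>)) x"
    by (simp add: integral_voronoi_step[OF zs(1)])
  finally show ?thesis .
qed

lemma set_X_integral_sm_convex:
  assumes x: "x \<in> convex_elems sm" and \<phi>: "continuous_on T \<phi>" "\<forall>t\<in>T. 0 \<le> \<phi> t"
  shows "set_X_integral sm P M Q (\<lambda>t. sm (\<phi> t) x) = sm (LINT t:Q|M. \<phi> t) x"
proof -
  obtain zss where nets: "fine_nets T zss"
    using fine_nets_exist[OF compact_T nonempty_T] by blast
  then have zss: "zss k \<noteq> []" "set (zss k) \<subseteq> T" for k
    by (auto simp: fine_nets_def)
  let ?a = "\<lambda>k. integral\<^sup>L M (voronoi_step Q (zss k) \<phi>)"
  have "0 \<le> ?a k" for k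
    using nearest_mem[OF zss(1)] zss(2)[of k] \<phi>(2)
    by (intro Bochner_Integration.integral_nonneg) (auto simp: voronoi_step_def subset_iff)
  moreover have "0 \<le> (LINT t:Q|M. \<phi> t)"
    by (rule set_integral_nonneg_on[OF \<phi>(2)])
  ultimately have "(\<lambda>k. sm (?a k) x) \<longlonglongrightarrow> sm (LINT t:Q|M. \<phi> t) x"
    by (intro tendsto_sm_convex[OF x tendsto_integral_voronoi_step[OF nets \<phi>(1)]]) auto
  moreover have "(\<lambda>k. sm (?a k) x) \<longlonglongrightarrow> set_X_integral sm P M Q (\<lambda>t. sm (\<phi> t) x)"
    using set_X_integral_voronoi_tendsto[OF nets continuous_on_sm_convex[OF x \<phi>]]
    unfolding simple_int_voronoi_step_sm_convex[OF x \<phi>(2) zss] .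
  ultimately show ?thesis
    using LIMSEQ_unique by metis
qed

lemma dist_set_X_integral_sm_normalized:
  assumes x: "x \<in> convex_elems sm" "x \<in> inv_elems" "x \<noteq> 0"
    and \<psi>1: "continuous_on T \<psi>1" "\<forall>t\<in>T. 0 \<le> \<psi>1 t" and \<psi>2: "continuous_on T \<psi>2" "\<forall>t\<in>T. 0 \<le> \<psi>2 t"
  shows "dist (set_X_integral sm P M Q (\<lambda>t. sm (\<psi>1 t / dist x 0) x))
      (set_X_integral sm P M Q (\<lambda>t. sm (\<psi>2 t / dist x 0) x))
    = \<bar>LINT t:Q|M. \<psi>1 t - \<psi>2 t\<bar>"
proof -
  let ?c = "dist x 0"
  have "0 < ?c"
    using x(3) by simp
  then have \<phi>: "continuous_on T (\<lambda>t. \<psi>1 t / ?c)" "\<forall>t\<in>T. 0 \<le> \<psi>1 t / ?c"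
    "continuous_on T (\<lambda>t. \<psi>2 t / ?c)" "\<forall>t\<in>T. 0 \<le> \<psi>2 t / ?c"
    using \<psi>1 \<psi>2 by (auto intro!: continuous_intros)
  have "dist (sm (LINT t:Q|M. \<psi>1 t / ?c) x) (sm (LINT t:Q|M. \<psi>2 t / ?c) x)
      = \<bar>(LINT t:Q|M. \<psi>1 t) / ?c - (LINT t:Q|M. \<psi>2 t) / ?c\<bar> * ?c"
    using dist_sm_convex_inv[OF x(1,2) set_integral_nonneg_on set_integral_nonneg_on, OF \<phi>(2,4)]
    by simp
  also have "\<dots> = \<bar>(LINT t:Q|M. \<psi>1 t) - (LINT t:Q|M. \<psi>2 t)\<bar>"
    using \<open>0 < ?c\<close> by (simp add: diff_divide_distrib[symmetric] abs_divide)
  also have "\<dots> = \<bar>LINT t:Q|M. \<psi>1 t - \<psi>2 t\<bar>"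
    using set_integral_diff(2)[OF set_integrable_continuous[OF \<psi>1(1)] set_integrable_continuous[OF \<psi>2(1)]]
    by simp
  finally show ?thesis
    unfolding set_X_integral_sm_convex[OF x(1) \<phi>(1,2)] set_X_integral_sm_convex[OF x(1) \<phi>(3,4)] .
qed

lemma dist_set_X_integral_voronoi_method_le:
  assumes \<omega>: "modulus_of_continuity \<omega>" and f: "f \<in> Hclass T \<omega>" and xs: "xs \<noteq> []" "set xs \<subseteq> T"
  shows "dist (set_X_integral sm P M Q f)
      (\<Sum>i<length xs. sm (measure M (vor_part T xs i \<inter> Q)) (P (f (xs ! i))))
    \<le> (LINT t:Q|M. min_modulus_dist \<omega> xs t)"
proof -
  let ?q = "voronoi_step Q xs f"
  let ?m = "min_modulus_dist \<omega> xs"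
  have f_cont: "continuous_on T f"
    by (rule Hclass_continuous_on[OF \<omega> f])
  have pointwise: "dist (if t \<in> Q then f t else 0) (?q t) \<le> (if t \<in> Q then ?m t else 0)"
    if "t \<in> space M" for t
  proof (cases "t \<in> Q")
    case True
    have "dist (f t) (f (xs ! nearest xs t)) \<le> \<omega> (dist t (xs ! nearest xs t))"
      using f that space_eq nearest_mem[OF xs(1)] xs(2) unfolding Hclass_def by blast
    with True show ?thesis
      by (simp add: voronoi_step_def min_modulus_dist_nearest[OF \<omega> xs(1)])
  qed (simp add: voronoi_step_def)
  have "dist (set_X_integral sm P M Q f) (simple_int sm P M ?q)
      \<le> integral\<^sup>L M (\<lambda>t. dist (if t \<in> Q then f t else 0) (?q t))"
    by (rule dist_set_X_integral_simple_le[OF f_cont simple_X_voronoi_step[OF xs(1)]])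
  also have "\<dots> \<le> integral\<^sup>L M (\<lambda>t. if t \<in> Q then ?m t else 0)"
  proof (rule integral_mono[OF _ _ pointwise])
    show "integrable M (\<lambda>t. dist (if t \<in> Q then f t else 0) (?q t))"
      using integrable_dist_simple_X[OF simple_X_voronoi_step[OF xs(1)] restrict_measurable[OF f_cont]
          restrict_bounded[OF f_cont]]
      by (simp add: dist_commute)
    show "integrable M (\<lambda>t. if t \<in> Q then ?m t else 0)"
      using Hclass_continuous_on[OF \<omega> min_modulus_dist_in_Hclass[OF \<omega> xs(1)]]
      by (rule integrable_restrict_continuous)
  qed
  also have "\<dots> = (LINT t:Q|M. ?m t)"
    by (rule set_integral_restrict[symmetric])
  finally show ?thesis
    unfolding simple_int_voronoi_step[OF xs(1)] .
qed

lemma Hclass_pair_same_information: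
  assumes \<omega>: "modulus_of_continuity \<omega>"
    and x: "x \<in> inv_elems" "x \<in> convex_elems sm" "x \<noteq> 0" and xs: "xs \<noteq> []"
  shows "\<exists>f1\<in>Hclass T \<omega>. \<exists>f2\<in>Hclass T \<omega>. map (\<lambda>y. P (f1 y)) xs = map (\<lambda>y. P (f2 y)) xs \<and>
    dist (set_X_integral sm P M Q f1) (set_X_integral sm P M Q f2)
      = 2 * (LINT t:Q|M. min_modulus_dist \<omega> xs t)"
proof -
  let ?m = "min_modulus_dist \<omega> xs"
  have m_Hclass: "?m \<in> Hclass T \<omega>"
    by (rule min_modulus_dist_in_Hclass[OF \<omega> xs])
  have m_nonneg: "0 \<le> ?m t" for t
    by (rule min_modulus_dist_nonneg[OF \<omega> xs])
  obtain B where B: "\<forall>t\<in>T. \<bar>?m t\<bar> \<le> B"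
    using compact_imp_bounded[OF compact_continuous_image[OF Hclass_continuous_on[OF \<omega> m_Hclass] compact_T]]
    by (auto simp: bounded_real)
  define \<psi>1 where "\<psi>1 t = B + ?m t" for t
  define \<psi>2 where "\<psi>2 t = B - ?m t" for t
  have \<psi>_Hclass: "\<psi>1 \<in> Hclass T \<omega>" "\<psi>2 \<in> Hclass T \<omega>"
    using m_Hclass unfolding Hclass_def \<psi>1_def \<psi>2_def by (auto simp: dist_real_def abs_minus_commute)
  have "0 \<le> B + ?m t" "0 \<le> B - ?m t" if "t \<in> T" for t
    using B m_nonneg[of t] that by auto
  then have \<psi>_nonneg: "\<forall>t\<in>T. 0 \<le> \<psi>1 t" "\<forall>t\<in>T. 0 \<le> \<psi>2 t"
    by (simp_all add: \<psi>1_def \<psi>2_def)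
  let ?f1 = "\<lambda>t. sm (\<psi>1 t / dist x 0) x" and ?f2 = "\<lambda>t. sm (\<psi>2 t / dist x 0) x"
  have Hclass: "?f1 \<in> Hclass T \<omega>" "?f2 \<in> Hclass T \<omega>"
    by (intro sm_convex_normalized_in_Hclass x(2,3) \<psi>_Hclass \<psi>_nonneg)+
  have information: "map (\<lambda>y. P (?f1 y)) xs = map (\<lambda>y. P (?f2 y)) xs"
    by (simp add: \<psi>1_def \<psi>2_def min_modulus_dist_node[OF \<omega>])
  have distance: "dist (set_X_integral sm P M Q ?f1) (set_X_integral sm P M Q ?f2)
      = 2 * (LINT t:Q|M. ?m t)"
    using set_integral_nonneg_on[of ?m] m_nonneg
    by (simp add: dist_set_X_integral_sm_normalized x Hclass_continuous_on[OF \<omega>] \<psi>_Hclass \<psi>_nonneg)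
      (simp add: \<psi>1_def \<psi>2_def)
  show ?thesis
    by (intro bexI[OF _ Hclass(1)] bexI[OF _ Hclass(2)] conjI information distance)
qed


lemma rec_error_voronoi_method_le:
  assumes "modulus_of_continuity \<omega>" "xs \<noteq> []" "set xs \<subseteq> T"
  shows "rec_error (set_X_integral sm P M Q) (Hclass T \<omega>) (\<lambda>f. map (\<lambda>x. P (f x)) xs)
      (\<lambda>ys. \<Sum>i<length xs. sm (measure M (vor_part T xs i \<inter> Q)) (ys ! i))
    \<le> ereal (LINT t:Q|M. min_modulus_dist \<omega> xs t)"
  unfolding rec_error_def
  by (rule SUP_least) (simp add: dist_set_X_integral_voronoi_method_le[OF assms(1) _ assms(2,3)])

lemma set_integral_min_modulus_le_rec_error:
  assumes "modulus_of_continuity \<omega>"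
    and "x \<in> inv_elems" "x \<in> convex_elems sm" "x \<noteq> 0" and "xs \<noteq> []"
  shows "ereal (LINT t:Q|M. min_modulus_dist \<omega> xs t)
    \<le> rec_error (set_X_integral sm P M Q) (Hclass T \<omega>) (\<lambda>f. map (\<lambda>x. P (f x)) xs) \<Phi>"
proof -
  obtain f1 f2 where f: "f1 \<in> Hclass T \<omega>" "f2 \<in> Hclass T \<omega>"
    and information: "map (\<lambda>x. P (f1 x)) xs = map (\<lambda>x. P (f2 x)) xs"
    and distance: "dist (set_X_integral sm P M Q f1) (set_X_integral sm P M Q f2)
      = 2 * (LINT t:Q|M. min_modulus_dist \<omega> xs t)"
    using Hclass_pair_same_information[OF assms] by blast
  show ?thesis
    using rec_error_ge_half_dist[OF f, where I = "\<lambda>f. map (\<lambda>x. P (f x)) xs", OF information,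
        where \<Lambda> = "set_X_integral sm P M Q" and \<Phi> = \<Phi>]
    unfolding distance by simp
qed

end

theorem theorem4:
  fixes sm :: "real \<Rightarrow> 'x::{comm_monoid_add,complete_space} \<Rightarrow> 'x"
    and P :: "'x \<Rightarrow> 'x"
    and T Q :: "'a::metric_space set"
    and \<mu> :: "'a measure"
    and \<omega> :: "real \<Rightarrow> real"
    and xs :: "'a list"
  assumes "L_space sm"
    and "convexifying sm P"
    and "inv_elems \<inter> convex_elems sm \<noteq> {0}"
    and "compact T"
    and "Q \<subseteq> T" and "compact Q"
    and "space \<mu> = T" and "sets \<mu> = sets (restrict_space borel T)"
    and "finite_measure \<mu>"
    and "modulus_of_continuity \<omega>"
    and "xs \<noteq> []" and "set xs \<subseteq> T"
  shows "(opt_rec_error (set_X_integral sm P \<mu> Q) (Hclass T \<omega>) (\<lambda>f. map (\<lambda>x. P (f x)) xs)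
           = ereal (LINT t:Q|\<mu>. Min ((\<lambda>x. \<omega> (dist x t)) ` set xs))) \<and>
         (rec_error (set_X_integral sm P \<mu> Q) (Hclass T \<omega>) (\<lambda>f. map (\<lambda>x. P (f x)) xs)
           (\<lambda>ys. \<Sum>i<length xs. sm (measure \<mu> (vor_part T xs i \<inter> Q)) (ys ! i))
         = opt_rec_error (set_X_integral sm P \<mu> Q) (Hclass T \<omega>) (\<lambda>f. map (\<lambda>x. P (f x)) xs))"
proof -
  have "T \<noteq> {}"
    using assms(11,12) by auto
  interpret recovery_setting sm P \<mu> T Q
    by (intro recovery_setting.intro convexified_finite_measure.intro L_space_convexifier.intro
        compact_borel_measure.intro compact_borel_measure_axioms.intro assms \<open>T \<noteq> {}\<close> compact_imp_closed)
  have "0 \<in> inv_elems \<inter> convex_elems sm"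
    unfolding inv_elems_def convex_elems_def by simp
  then obtain x where x: "x \<in> inv_elems" "x \<in> convex_elems sm" "x \<noteq> 0"
    using assms(3) by blast
  show ?thesis
    unfolding min_modulus_dist_def[symmetric]
    by (rule opt_rec_error_eqI[OF rec_error_voronoi_method_le[OF assms(10-12)]
          set_integral_min_modulus_le_rec_error[OF assms(10) x assms(11)]])
qed

end
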